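(* For all $n\ge1$, $$B_n(q)=\sum_{w\in S_n}(-1)^{\ell(w)}q^{\beta(w)}=\prod_{k=1}^{n-1}(1-q^k)^{n-k}.$$
   Context: For $w\in S_n$, $\ell(w)=\#\{(i,j): i<j,\ w(i)>w(j)\}$ is the inversion number. The bigrassmannian statistic of $w$ is $\beta(w)=\sum_{i,j=1}^n\min(i,j)-\sum_{i,j=1}^n\widetilde w(i,j)$, where $\widetilde w(i,j)=\#\{p\le i : w(p)\le j\}$ is the corner sum matrix of the permutation matrix of $w$; equivalently $\beta(w)=\sum_{i=1}^n\frac12(i-w(i))^2$. *)

theory Defs
  imports "HOL-Combinatorics.Permutations"
begin

text \<open>Permutations of [n] = {1..n} are functions nat => nat with w permutes {1..n}.\<close>

definition inversions :: "nat \<Rightarrow> (nat \<Rightarrow> nat) \<Rightarrow> nat" where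
  "inversions n w = card {(i, j). i \<in> {1..n} \<and> j \<in> {1..n} \<and> i < j \<and> w j < w i}"

definition corner_sum :: "(nat \<Rightarrow> nat) \<Rightarrow> nat \<Rightarrow> nat \<Rightarrow> nat" where
  "corner_sum w i j = card {p \<in> {1..i}. w p \<le> j}"

text \<open>Bigrassmannian statistic (always a nonnegative integer).\<close>
definition bigrass :: "nat \<Rightarrow> (nat \<Rightarrow> nat) \<Rightarrow> nat" where
  "bigrass n w = nat ((\<Sum>i=1..n. \<Sum>j=1..n. int (min i j))
                     - (\<Sum>i=1..n. \<Sum>j=1..n. int (corner_sum w i j)))"

end

theory Submission
  imports Defs "Jordan_Normal_Form.Determinant"
begin

text \<open>
  Put \<open>y p = q ^ (n + 1 - p)\<close> and \<open>K = \<Sum>p. (n + 1 - p) * p\<close>. Counting corner sums gives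
  \<open>\<beta>(w) + K = \<Sum>p. (n + 1 - p) * w p\<close>, and \<open>(-1) ^ \<ell>(w)\<close> is the sign of \<open>w\<close>, so
  \<open>q ^ K * B\<^sub>n(q) = \<Sum>w. sign w * (\<Prod>p. y p ^ w p)\<close> is the Leibniz expansion of
  \<open>\<Prod>p. y p\<close> times the Vandermonde determinant of \<open>y 1, \<dots>, y n\<close>. Because
  \<open>y j - y i = q ^ (n + 1 - j) * (1 - q ^ (j - i))\<close> for \<open>i < j\<close>, that is \<open>q ^ K\<close> times
  \<open>\<Prod>k. (1 - q ^ k) ^ (n - k)\<close>. In an arbitrary ring \<open>q ^ K\<close> cannot be cancelled, so the
  identity is proved for the indeterminate of the polynomial ring and then evaluated at \<open>q\<close>.
\<close>

section \<open>Sign and inversions\<close>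

definition inversion_set :: "nat \<Rightarrow> (nat \<Rightarrow> nat) \<Rightarrow> (nat \<times> nat) set" where
  "inversion_set n w = {(i, j). i \<in> {1..n} \<and> j \<in> {1..n} \<and> i < j \<and> w j < w i}"

lemma inversions_eq_card_inversion_set: "inversions n w = card (inversion_set n w)"
  unfolding inversions_def inversion_set_def ..

lemma finite_inversion_set: "finite (inversion_set n w)"
  by (rule finite_subset[of _ "{1..n} \<times> {1..n}"]) (auto simp: inversion_set_def)

lemma adjacent_descent_if_inversions_pos:
  assumes "inversions n w \<noteq> 0"
  obtains k where "1 \<le> k" "Suc k \<le> n" "w (Suc k) < w k"
proof -
  from assms obtain i j where "(i, j) \<in> inversion_set n w"
    unfolding inversions_eq_card_inversion_set by (metis card.empty ex_in_conv prod.exhaust)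
  hence ij: "1 \<le> i" "i < j" "j \<le> n" "w j < w i" by (auto simp: inversion_set_def)
  show ?thesis
  proof (rule ccontr)
    assume "\<not> ?thesis"
    with that have "w k \<le> w (Suc k)" if "k \<in> {1..<n}" for k
      using that by (meson atLeastLessThan_iff Suc_leI not_less)
    hence "w i \<le> w j"
      by (rule lift_Suc_mono_le_ivl[where N = "{1..<n}"]) (use ij in auto)
    with ij show False by simp
  qed
qed

lemma permutes_eq_id_if_no_inversions:
  assumes w: "w permutes {1..n}" and "inversions n w = 0"
  shows "w = id"
proof (rule permutes_natset_ge[OF w], rule ballI)
  have no_inv: "inversion_set n w = {}"
    using assms(2) finite_inversion_set[of n w] by (simp add: inversions_eq_card_inversion_set)
  have "i \<le> w i" if "1 \<le> i" "i \<le> n" for i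
    using that
  proof (induction i rule: nat_induct_at_least)
    case base
    thus ?case using permutes_in_image[OF w] by auto
  next
    case (Suc m)
    have "\<not> w (Suc m) < w m" using Suc.prems no_inv Suc.hyps by (auto simp: inversion_set_def)
    moreover have "w (Suc m) \<noteq> w m" using permutes_inj[OF w] by (metis inj_eq n_not_Suc_n)
    ultimately show ?case using Suc by simp
  qed
  thus "i \<in> {1..n} \<Longrightarrow> i \<le> w i" for i by simp
qed

lemma inversion_set_swap_adjacent_descent:
  assumes "1 \<le> k" "Suc k \<le> n" "w (Suc k) < w k"
  shows "(transpose k (Suc k) a, transpose k (Suc k) b) \<in> inversion_set n (w \<circ> transpose k (Suc k))
     \<longleftrightarrow> (a, b) \<in> inversion_set n w \<and> (a, b) \<noteq> (k, Suc k)"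
  unfolding inversion_set_def using assms
  by (cases "a = k"; cases "a = Suc k"; cases "b = k"; cases "b = Suc k") (auto simp: transpose_def)

lemma inversions_swap_adjacent_descent:
  assumes "1 \<le> k" "Suc k \<le> n" "w (Suc k) < w k"
  shows "inversions n w = Suc (inversions n (w \<circ> transpose k (Suc k)))"
proof -
  let ?v = "w \<circ> transpose k (Suc k)"
  define f where "f = map_prod (transpose k (Suc k)) (transpose k (Suc k))"
  have ff: "f (f x) = x" for x unfolding f_def by (cases x) simp
  have mem: "f x \<in> inversion_set n ?v \<longleftrightarrow> x \<in> inversion_set n w - {(k, Suc k)}" for x
    using inversion_set_swap_adjacent_descent[OF assms, of "fst x" "snd x"]
    unfolding f_def by (cases x) auto
  have "inversion_set n w - {(k, Suc k)} = f ` inversion_set n ?v"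
    using mem ff by (metis (no_types, lifting) image_eqI imageE subsetI subset_antisym)
  moreover have "(k, Suc k) \<in> inversion_set n w" using assms by (auto simp: inversion_set_def)
  moreover have "inj f" by (metis ff injI)
  ultimately show ?thesis
    unfolding inversions_eq_card_inversion_set
    by (metis card_Suc_Diff1 card_image finite_inversion_set inj_on_subset subset_UNIV)
qed

lemma sign_eq_neg_one_pow_inversions:
  assumes "w permutes {1..n}"
  shows "sign w = (-1) ^ inversions n w"
  using assms
proof (induction "inversions n w" arbitrary: w)
  case 0
  thus ?case using permutes_eq_id_if_no_inversions[OF 0(2) 0(1)[symmetric]] by simp
next
  case (Suc m)
  then obtain k where k: "1 \<le> k" "Suc k \<le> n" "w (Suc k) < w k"
    using adjacent_descent_if_inversions_pos by (metis nat.distinct(1))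
  let ?t = "transpose k (Suc k)"
  have t: "?t permutes {1..n}" using k by (intro permutes_swap_id) auto
  have "inversions n (w \<circ> ?t) = m" using inversions_swap_adjacent_descent[OF k] Suc(2) by simp
  hence "sign (w \<circ> ?t) = (-1) ^ m" using Suc(1) permutes_compose[OF t Suc(3)] by simp
  moreover have "sign (w \<circ> ?t) = - sign w"
    using sign_compose[of w ?t] permutes_imp_permutation[OF _ Suc(3)] permutes_imp_permutation[OF _ t]
    by (simp add: sign_swap_id)
  ultimately show ?case using Suc(2)[symmetric] by simp
qed

section \<open>The Vandermonde determinant\<close>

definition vandermonde_mat :: "nat \<Rightarrow> (nat \<Rightarrow> 'a::comm_ring_1) \<Rightarrow> 'a mat" where
  "vandermonde_mat n x = mat n n (\<lambda>(i, j). x i ^ j)"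

lemma sum_power_mult_bidiagonal:
  fixes c y :: "'a::comm_ring_1"
  assumes "j < n"
  shows "(\<Sum>k = 0..<n. y ^ k * (if k = j then 1 else if Suc k = j then c else 0))
        = (if j = 0 then 1 else y ^ (j - 1) * (y + c))"
proof (cases j)
  case 0
  thus ?thesis using assms by (simp add: if_distrib cong: if_cong)
next
  case (Suc j')
  have "(\<Sum>k = 0..<n. y ^ k * (if k = j then 1 else if Suc k = j then c else 0))
      = (\<Sum>k = 0..<n. (if k = j then y ^ j else 0) + (if k = j' then y ^ j' * c else 0))"
    by (rule sum.cong) (auto simp: Suc)
  also have "\<dots> = y ^ j + y ^ j' * c"
    using assms Suc by (simp add: sum.distrib)
  finally show ?thesis using Suc by (simp add: algebra_simps)
qed

text \<open>Subtracting \<open>x 0\<close> times column \<open>j - 1\<close> from column \<open>j\<close> clears the first row.\<close>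
lemma vandermonde_mat_column_reduction:
  "vandermonde_mat (Suc n) x
     * mat (Suc n) (Suc n) (\<lambda>(i, j). if i = j then 1 else if Suc i = j then - x 0 else 0)
   = mat (Suc n) (Suc n) (\<lambda>(i, j). if j = 0 then 1 else x i ^ (j - 1) * (x i - x 0))"
  (is "?V * ?U = ?B")
proof (rule eq_matI)
  fix i j assume "i < dim_row ?B" "j < dim_col ?B"
  thus "(?V * ?U) $$ (i, j) = ?B $$ (i, j)"
    using sum_power_mult_bidiagonal[of j "Suc n" "x i" "- x 0"]
    by (simp add: vandermonde_mat_def scalar_prod_def)
qed (simp_all add: vandermonde_mat_def)

lemma det_vandermonde_mat_Suc:
  fixes x :: "nat \<Rightarrow> 'a::comm_ring_1"
  shows "det (vandermonde_mat (Suc n) x)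
    = (\<Prod>i<n. x (Suc i) - x 0) * det (vandermonde_mat n (\<lambda>i. x (Suc i)))"
proof -
  define U :: "'a mat" where
    "U = mat (Suc n) (Suc n) (\<lambda>(i, j). if i = j then 1 else if Suc i = j then - x 0 else 0)"
  define B where "B = mat (Suc n) (Suc n) (\<lambda>(i, j). if j = 0 then 1 else x i ^ (j - 1) * (x i - x 0))"
  define D :: "'a mat" where "D = mat n n (\<lambda>(i, j). if i = j then x (Suc i) - x 0 else 0)"
  have B: "B \<in> carrier_mat (Suc n) (Suc n)" by (simp add: B_def)
  have "det U = 1"
    by (subst det_upper_triangular[of _ "Suc n"])
      (auto simp: U_def upper_triangular_def prod_list_diag_prod)
  hence "det (vandermonde_mat (Suc n) x) = det B"
    using det_mult[of "vandermonde_mat (Suc n) x" "Suc n" U] vandermonde_mat_column_reduction[of n x]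
    by (simp add: U_def B_def vandermonde_mat_def)
  also have "\<dots> = B $$ (0, 0) * cofactor B 0 0"
    by (subst laplace_expansion_row[OF B, of 0]) (simp_all add: B_def sum.lessThan_Suc_shift del: sum.lessThan_Suc)
  also have "\<dots> = det (D * vandermonde_mat n (\<lambda>i. x (Suc i)))"
  proof -
    have "mat_delete B 0 0 = D * vandermonde_mat n (\<lambda>i. x (Suc i))"
      by (rule eq_matI)
        (auto simp: mat_delete_def B_def D_def vandermonde_mat_def scalar_prod_def mult.commute
          if_distrib[where f = "times _"] cong: if_cong)
    thus ?thesis by (simp add: B_def cofactor_def)
  qed
  also have "\<dots> = det D * det (vandermonde_mat n (\<lambda>i. x (Suc i)))"
    by (rule det_mult) (auto simp: D_def vandermonde_mat_def)
  also have "det D = (\<Prod>i<n. x (Suc i) - x 0)"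
    by (subst det_upper_triangular[of _ n])
      (auto simp: D_def upper_triangular_def prod_list_diag_prod atLeast0LessThan)
  finally show ?thesis .
qed

lemma det_vandermonde_mat:
  fixes x :: "nat \<Rightarrow> 'a::comm_ring_1"
  shows "det (vandermonde_mat n x) = (\<Prod>j<n. \<Prod>i<j. x j - x i)"
proof (induction n arbitrary: x)
  case 0
  show ?case by (simp add: vandermonde_mat_def det_dim_zero)
next
  case (Suc n)
  show ?case
    by (simp add: det_vandermonde_mat_Suc Suc.IH prod.lessThan_Suc_shift prod.distrib
        del: prod.lessThan_Suc)
qed

lemma bij_betw_map_permutation_Suc:
  "bij_betw (map_permutation {0..<n} Suc) {\<sigma>. \<sigma> permutes {0..<n}} {w. w permutes {1..n}}"
proof -
  have Suc: "bij_betw Suc {0..<n} {1..n}"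
    by (auto simp: bij_betw_def image_iff inj_on_def intro!: bexI[of _ "_ - 1"])
  have pred: "bij_betw (\<lambda>p. p - 1) {1..n} {0..<n}"
    by (auto simp: bij_betw_def image_iff inj_on_def intro!: bexI[of _ "Suc _"])
  have "map_permutation {1..n} (\<lambda>p. p - 1) (map_permutation {0..<n} Suc \<sigma>) = \<sigma>"
    if "\<sigma> permutes {0..<n}" for \<sigma>
    by (rule map_permutation_compose_inv[OF Suc that]) simp
  moreover have "map_permutation {0..<n} Suc (map_permutation {1..n} (\<lambda>p. p - 1) w) = w"
    if "w permutes {1..n}" for w
    by (rule map_permutation_compose_inv[OF pred that]) simp
  ultimately show ?thesis
    by (intro bij_betw_byWitness[where f' = "map_permutation {1..n} (\<lambda>p. p - 1)"])
      (use map_permutation_permutes[OF Suc] map_permutation_permutes[OF pred] in blast)+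
qed

lemma sum_sign_prod_power_eq_det_vandermonde:
  fixes y :: "nat \<Rightarrow> 'a::comm_ring_1"
  shows "(\<Sum>w | w permutes {1..n}. of_int (sign w) * (\<Prod>p=1..n. y p ^ w p))
    = (\<Prod>i<n. y (Suc i)) * det (vandermonde_mat n (\<lambda>i. y (Suc i)))"
proof -
  have "(\<Sum>w | w permutes {1..n}. of_int (sign w) * (\<Prod>p=1..n. y p ^ w p))
      = (\<Sum>\<sigma> | \<sigma> permutes {0..<n}. (\<Prod>i<n. y (Suc i)) * (signof \<sigma> * (\<Prod>i=0..<n. y (Suc i) ^ \<sigma> i)))"
  proof (rule sum.reindex_bij_betw[OF bij_betw_map_permutation_Suc, symmetric, THEN trans],
      rule sum.cong[OF refl])
    fix \<sigma> assume "\<sigma> \<in> {\<sigma>. \<sigma> permutes {0..<n}}"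
    hence \<sigma>: "\<sigma> permutes {0..<n}" by simp
    have "(\<Prod>i=0..<n. y (Suc i) ^ Suc (\<sigma> i))
        = (\<Prod>p=1..n. y p ^ map_permutation {0..<n} Suc \<sigma> p)"
      by (rule prod.reindex_bij_witness[of _ "\<lambda>p. p - 1" Suc]) (auto simp: map_permutation_apply)
    thus "of_int (sign (map_permutation {0..<n} Suc \<sigma>)) * (\<Prod>p=1..n. y p ^ map_permutation {0..<n} Suc \<sigma> p)
        = (\<Prod>i<n. y (Suc i)) * (signof \<sigma> * (\<Prod>i=0..<n. y (Suc i) ^ \<sigma> i))"
      using sign_map_permutation[OF _ \<sigma>, of Suc]
      by (simp add: prod.distrib atLeast0LessThan ac_simps)
  qed
  also have "\<dots> = (\<Prod>i<n. y (Suc i)) * det (vandermonde_mat n (\<lambda>i. y (Suc i)))"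
    by (subst det_def'[of _ n])
      (auto simp: vandermonde_mat_def sum_distrib_left intro!: sum.cong prod.cong
        dest: permutes_in_image)
  finally show ?thesis .
qed

section \<open>Corner sums and the bigrassmannian statistic\<close>

lemma sum_of_bool_ge_atLeastAtMost:
  assumes "1 \<le> p"
  shows "(\<Sum>i=1..n. of_bool (p \<le> i) :: nat) = n + 1 - p"
proof -
  have "{1..n} \<inter> {i. p \<le> i} = {p..n}" using assms by auto
  thus ?thesis by (simp add: sum_of_bool_eq)
qed

lemma sum_sum_corner_sum:
  assumes "\<And>p. p \<in> {1..n} \<Longrightarrow> 1 \<le> w p"
  shows "(\<Sum>i=1..n. \<Sum>j=1..n. corner_sum w i j) = (\<Sum>p=1..n. (n + 1 - p) * (n + 1 - w p))"
proof -
  have "corner_sum w i j = (\<Sum>p=1..n. of_bool (p \<le> i) * of_bool (w p \<le> j))" if "i \<le> n" for i j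
  proof -
    have "{p \<in> {1..i}. w p \<le> j} = {1..n} \<inter> {p. p \<le> i \<and> w p \<le> j}" using that by auto
    thus ?thesis by (simp add: corner_sum_def sum_of_bool_eq flip: of_bool_conj)
  qed
  hence "(\<Sum>i=1..n. \<Sum>j=1..n. corner_sum w i j)
      = (\<Sum>i=1..n. \<Sum>j=1..n. \<Sum>p=1..n. of_bool (p \<le> i) * of_bool (w p \<le> j))"
    by simp
  also have "\<dots> = (\<Sum>i=1..n. \<Sum>p=1..n. \<Sum>j=1..n. of_bool (p \<le> i) * of_bool (w p \<le> j))"
    by (rule sum.cong[OF refl], rule sum.swap)
  also have "\<dots> = (\<Sum>p=1..n. \<Sum>i=1..n. \<Sum>j=1..n. of_bool (p \<le> i) * of_bool (w p \<le> j))"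
    by (rule sum.swap)
  also have "\<dots> = (\<Sum>p=1..n. (\<Sum>i=1..n. of_bool (p \<le> i)) * (\<Sum>j=1..n. of_bool (w p \<le> j)))"
    by (simp only: sum_product)
  also have "\<dots> = (\<Sum>p=1..n. (n + 1 - p) * (n + 1 - w p))"
  proof (intro sum.cong refl)
    fix p assume "p \<in> {1..n}"
    thus "(\<Sum>i=1..n. of_bool (p \<le> i)) * (\<Sum>j=1..n. of_bool (w p \<le> j)) = (n + 1 - p) * (n + 1 - w p)"
      using assms[of p] sum_of_bool_ge_atLeastAtMost[of p n] sum_of_bool_ge_atLeastAtMost[of "w p" n]
      by simp
  qed
  finally show ?thesis .
qed

lemma sum_sum_min: "(\<Sum>i=1..n::nat. \<Sum>j=1..n. min i j) = (\<Sum>p=1..n. (n + 1 - p) * (n + 1 - p))"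
proof -
  have "corner_sum id i j = min i j" for i j
  proof -
    have "{p \<in> {1..i}. id p \<le> j} = {1..min i j}" by auto
    thus ?thesis by (simp add: corner_sum_def)
  qed
  thus ?thesis using sum_sum_corner_sum[where w = id and n = n] by simp
qed

lemma sum_square_displacement:
  assumes w: "w permutes {1..n}"
  shows "(\<Sum>p=1..n. (int p - int (w p))\<^sup>2)
    = 2 * (\<Sum>p=1..n. (int n + 1 - int p) * (int (w p) - int p))"
proof -
  have perm: "(\<Sum>p=1..n. f (w p)) = (\<Sum>p=1..n. f p)" for f :: "nat \<Rightarrow> int"
    using sum.permute[OF w, of f] by (simp add: o_def)
  have "(\<Sum>p=1..n. (int p - int (w p))\<^sup>2)
      = (\<Sum>p=1..n. (int p)\<^sup>2) + (\<Sum>p=1..n. (int (w p))\<^sup>2) - 2 * (\<Sum>p=1..n. int p * int (w p))"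
    by (simp add: power2_diff sum.distrib sum_subtractf sum_distrib_left mult.assoc)
  also have "\<dots> = 2 * ((int n + 1) * ((\<Sum>p=1..n. int (w p)) - (\<Sum>p=1..n. int p))
      + (\<Sum>p=1..n. (int p)\<^sup>2) - (\<Sum>p=1..n. int p * int (w p)))"
    using perm[of "\<lambda>p. (int p)\<^sup>2"] perm[of int] by simp
  also have "\<dots> = 2 * (\<Sum>p=1..n. (int n + 1 - int p) * (int (w p) - int p))"
    by (simp add: sum_distrib_left sum_subtractf sum.distrib algebra_simps power2_eq_square)
  finally show ?thesis .
qed

lemma bigrass_add_eq:
  assumes w: "w permutes {1..n}"
  shows "bigrass n w + (\<Sum>p=1..n. (n + 1 - p) * p) = (\<Sum>p=1..n. (n + 1 - p) * w p)"
proof -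
  have wp: "w p \<in> {1..n}" if "p \<in> {1..n}" for p using permutes_in_image[OF w] that by simp
  have int_diff: "int (Suc n - p) = int n + 1 - int p" "int (Suc n - w p) = int n + 1 - int (w p)"
    if "p \<in> {1..n}" for p using that wp[OF that] by auto
  define D where "D = (\<Sum>p=1..n. (int n + 1 - int p) * (int (w p) - int p))"
  have "(\<Sum>i=1..n. \<Sum>j=1..n. int (min i j)) - (\<Sum>i=1..n. \<Sum>j=1..n. int (corner_sum w i j))
      = int (\<Sum>p=1..n. (n + 1 - p) * (n + 1 - p)) - int (\<Sum>p=1..n. (n + 1 - p) * (n + 1 - w p))"
    using sum_sum_min[of n] sum_sum_corner_sum[of n w] wp by (simp flip: of_nat_sum)
  also have "\<dots> = D"
    unfolding D_def of_nat_sum of_nat_mult sum_subtractf[symmetric]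
    by (intro sum.cong refl) (simp add: int_diff algebra_simps)
  \<comment> \<open>\<open>bigrass\<close> truncates to \<open>nat\<close>; the sum of squares shows that nothing is lost.\<close>
  finally have "int (bigrass n w) = D"
    using sum_square_displacement[OF w] sum_nonneg[of "{1..n}" "\<lambda>p. (int p - int (w p))\<^sup>2"]
    by (simp add: bigrass_def D_def)
  moreover have "D = int (\<Sum>p=1..n. (n + 1 - p) * w p) - int (\<Sum>p=1..n. (n + 1 - p) * p)"
    unfolding D_def of_nat_sum of_nat_mult sum_subtractf[symmetric]
    by (intro sum.cong refl) (simp add: int_diff algebra_simps)
  ultimately show ?thesis by linarith
qed

section \<open>The product formula\<close>

lemma prod_lessThan_triangle:
  fixes f :: "nat \<Rightarrow> 'a::comm_monoid_mult"
  shows "(\<Prod>j<n. \<Prod>i<j. f (j - i)) = (\<Prod>k=1..n-1. f k ^ (n - k))"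
proof (induction n)
  case 0
  show ?case by simp
next
  case (Suc n)
  have "(\<Prod>i<n. f (n - i)) = (\<Prod>k=1..n. f k)"
    by (rule prod.reindex_bij_witness[of _ "\<lambda>k. n - k" "\<lambda>i. n - i"]) auto
  moreover have "(\<Prod>k=1..n-1. f k ^ (n - k)) = (\<Prod>k=1..n. f k ^ (n - k))"
    by (cases n) (simp_all add: prod.cl_ivl_Suc)
  ultimately have "(\<Prod>j<Suc n. \<Prod>i<j. f (j - i)) = (\<Prod>k=1..n. f k ^ (n - k) * f k)"
    using Suc.IH by (simp add: prod.distrib)
  also have "\<dots> = (\<Prod>k=1..n. f k ^ (Suc n - k))"
    by (rule prod.cong) (auto simp: Suc_diff_le mult.commute)
  finally show ?case by simp
qed

lemma prod_diff_powers_triangle: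
  fixes q :: "'a::comm_ring_1"
  shows "(\<Prod>j<n. \<Prod>i<j. q ^ (n - j) - q ^ (n - i))
    = q ^ (\<Sum>j<n. (n - j) * j) * (\<Prod>k=1..n-1. (1 - q ^ k) ^ (n - k))"
proof -
  have "q ^ (n - j) - q ^ (n - i) = q ^ (n - j) * (1 - q ^ (j - i))" if "i < j" "j < n" for i j
  proof -
    have "n - i = (n - j) + (j - i)" using that by simp
    thus ?thesis by (simp only: power_add right_diff_distrib mult_1_right)
  qed
  hence "(\<Prod>j<n. \<Prod>i<j. q ^ (n - j) - q ^ (n - i)) = (\<Prod>j<n. \<Prod>i<j. q ^ (n - j) * (1 - q ^ (j - i)))"
    by (intro prod.cong refl) simp
  also have "\<dots> = q ^ (\<Sum>j<n. (n - j) * j) * (\<Prod>j<n. \<Prod>i<j. 1 - q ^ (j - i))"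
    by (simp add: prod.distrib power_sum power_mult)
  finally show ?thesis by (simp only: prod_lessThan_triangle[of "\<lambda>k. 1 - q ^ k"])
qed

lemma sum_signed_bigrass_mult_power:
  fixes q :: "'a::comm_ring_1" and n :: nat
  defines "K \<equiv> \<Sum>p=1..n. (n + 1 - p) * p"
  shows "(\<Sum>w | w permutes {1..n}. (-1) ^ inversions n w * q ^ bigrass n w) * q ^ K
    = (\<Prod>k=1..n-1. (1 - q ^ k) ^ (n - k)) * q ^ K"
proof -
  define y where "y p = q ^ (n + 1 - p)" for p
  have "(\<Sum>w | w permutes {1..n}. (-1) ^ inversions n w * q ^ bigrass n w) * q ^ K
      = (\<Sum>w | w permutes {1..n}. of_int (sign w) * (\<Prod>p=1..n. y p ^ w p))"
    unfolding sum_distrib_right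
  proof (intro sum.cong refl)
    fix w assume "w \<in> {w. w permutes {1..n}}"
    hence w: "w permutes {1..n}" by simp
    have "q ^ bigrass n w * q ^ K = q ^ (\<Sum>p=1..n. (n + 1 - p) * w p)"
      using bigrass_add_eq[OF w] by (simp add: K_def flip: power_add)
    also have "\<dots> = (\<Prod>p=1..n. y p ^ w p)"
      by (simp add: power_sum y_def power_mult)
    finally show "(-1) ^ inversions n w * q ^ bigrass n w * q ^ K = of_int (sign w) * (\<Prod>p=1..n. y p ^ w p)"
      by (simp add: sign_eq_neg_one_pow_inversions[OF w] mult.assoc)
  qed
  also have "\<dots> = (\<Prod>i<n. y (Suc i)) * (\<Prod>j<n. \<Prod>i<j. y (Suc j) - y (Suc i))"
    unfolding sum_sign_prod_power_eq_det_vandermonde det_vandermonde_mat ..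
  also have "\<dots> = q ^ ((\<Sum>i<n. n - i) + (\<Sum>j<n. (n - j) * j)) * (\<Prod>k=1..n-1. (1 - q ^ k) ^ (n - k))"
  proof -
    have "(\<Prod>i<n. y (Suc i)) = q ^ (\<Sum>i<n. n - i)"
      by (simp add: y_def power_sum)
    moreover have "(\<Prod>j<n. \<Prod>i<j. y (Suc j) - y (Suc i)) = (\<Prod>j<n. \<Prod>i<j. q ^ (n - j) - q ^ (n - i))"
      by (simp add: y_def)
    ultimately show ?thesis
      by (simp only: prod_diff_powers_triangle power_add mult.assoc)
  qed
  also have "(\<Sum>i<n. n - i) + (\<Sum>j<n. (n - j) * j) = K"
  proof -
    have "(\<Sum>i<n. n - i) + (\<Sum>j<n. (n - j) * j) = (\<Sum>j<n. (n - j) * Suc j)"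
      by (simp add: sum.distrib[symmetric] algebra_simps)
    also have "\<dots> = K"
      unfolding K_def by (rule sum.reindex_bij_witness[of _ "\<lambda>p. p - 1" Suc]) auto
    finally show ?thesis .
  qed
  finally show ?thesis by (simp add: mult.commute)
qed

lemma mult_power_monom_1_right_cancel:
  fixes p r :: "'a::comm_ring_1 poly"
  assumes "p * monom 1 1 ^ k = r * monom 1 1 ^ k"
  shows "p = r"
proof (rule poly_eqI)
  fix m
  have "coeff (monom 1 k * p) (m + k) = coeff (monom 1 k * r) (m + k)"
    using assms by (simp add: monom_power mult.commute)
  thus "coeff p m = coeff r m" by (simp add: coeff_monom_mult)
qed

theorem theorem5p3:
  fixes q :: "'a :: comm_ring_1" and n :: nat
  assumes "n \<ge> 1"
  shows "(\<Sum>w \<in> {w. w permutes {1..n}}. (-1) ^ inversions n w * q ^ bigrass n w)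
         = (\<Prod>k=1..n-1. (1 - q ^ k) ^ (n - k))"
proof -
  \<comment> \<open>The identity holds for \<open>n = 0\<close> as well.\<close>
  let ?X = "monom (1::'a) 1"
  have "(\<Sum>w | w permutes {1..n}. (-1) ^ inversions n w * ?X ^ bigrass n w)
      = (\<Prod>k=1..n-1. (1 - ?X ^ k) ^ (n - k))"
    by (rule mult_power_monom_1_right_cancel) (rule sum_signed_bigrass_mult_power)
  hence "poly (\<Sum>w | w permutes {1..n}. (-1) ^ inversions n w * ?X ^ bigrass n w) q
      = poly (\<Prod>k=1..n-1. (1 - ?X ^ k) ^ (n - k)) q"
    by (rule arg_cong)
  thus ?thesis by (simp add: poly_sum poly_prod poly_monom)
qed

end
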